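(* Let $\lambda_1\ge0$ and $\lambda_2>0$, let $\langle f,g\rangle_S=\int_{\mathbb R}fg\,e^{-x^4}dx+\lambda_1f(0)g(0)+\lambda_2f'(0)g'(0)$, and let $(\widehat Q_n)_{n\ge0}$ be the orthonormal polynomials for $\langle\cdot,\cdot\rangle_S$ ($\deg\widehat Q_n=n$, positive leading coefficient, $\langle\widehat Q_n,\widehat Q_m\rangle_S=\delta_{nm}$), with $\widehat Q_{-1}=\widehat Q_{-2}=0$. Then: (1) there are real numbers $\alpha_n$ and $\beta_n$ such that for all $n\ge0$, $$x^2\widehat Q_n(x)=\alpha_n\widehat Q_{n+2}(x)+\beta_n\widehat Q_n(x)+\alpha_{n-2}\widehat Q_{n-2}(x);$$ (2) for every $n\ge2$, the zeros of $\widehat Q_n$ are real and interlace with the zeros of $\widehat Q_{n-2}$.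
   Context: The polynomials $\widehat Q_n$ have the parity of $n$. "Interlace" means: if $0<y_1<\dots<y_p$ are the positive zeros of $\widehat Q_n$, then $\widehat Q_{n-2}$ has exactly $p-1$ positive zeros $z_1<\dots<z_{p-1}$ and $y_1<z_1<y_2<z_2<\dots<z_{p-1}<y_p$ (the negative zeros being symmetric). The values of $\alpha_{-1},\alpha_{-2}$ are irrelevant since they multiply $\widehat Q_{-1}=\widehat Q_{-2}=0$. *)

theory Defs
  imports "HOL-Analysis.Analysis" "HOL-Computational_Algebra.Polynomial"
begin

definition sob_ip :: "real \<Rightarrow> real \<Rightarrow> real poly \<Rightarrow> real poly \<Rightarrow> real" where
  "sob_ip l1 l2 f g =
     (\<integral>x. poly f x * poly g x * exp (- (x ^ 4)) \<partial>lborel)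
     + l1 * poly f 0 * poly g 0
     + l2 * poly (pderiv f) 0 * poly (pderiv g) 0"

definition pos_zeros :: "real poly \<Rightarrow> real list" where
  "pos_zeros p = sorted_list_of_set {y. 0 < y \<and> poly p y = 0}"

definition interlace :: "real poly \<Rightarrow> real poly \<Rightarrow> bool" where
  "interlace p q =
     (let ys = pos_zeros p; zs = pos_zeros q in
        length zs + 1 = length ys \<and>
        (\<forall>i < length zs. ys ! i < zs ! i \<and> zs ! i < ys ! (i + 1)))"

end

theory Submission
  imports Defs "HOL-Probability.Distributions"
begin

text \<open>
  Reflection x \<mapsto> -x preserves the Sobolev product, so Q_n has the parity of n; and multiplication
  by x^2 is symmetric for it, because x^2 f and its derivative vanish at 0. Hence x^2 Q_n is
  orthogonal to every Q_k except k = n - 2, n, n + 2, which is the recurrence.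

  Differentiating the recurrence gives a Christoffel-Darboux type identity for
  W_n = Q_{n+2}' Q_n - Q_n' Q_{n+2}, namely \<alpha>_n W_n = 2x Q_n^2 + \<alpha>_{n-2} W_{n-2} with \<alpha>_n > 0,
  so W_n > 0 on (0, \<infinity>). Thus the positive zeros of Q_{n+2} are simple and Q_n has opposite signs
  at consecutive ones, giving a zero of Q_n in every gap.

  Q_n has n div 2 positive zeros: otherwise dividing Q_n by the product P of the linear factors of
  its symmetric set of real zeros leaves an even factor T of constant sign, and then
  <Q_n, P>_S = <T P, P>_S > 0 (the point terms are nonnegative since T'(0) = 0), contradicting
  deg P < n. Counting now shows that all zeros are real and that the n div 2 positive zeros of
  Q_n lie one in each of the gaps between the n div 2 + 1 positive zeros of Q_{n+2}.
\<close>

section \<open>Polynomials against the weight e^{-x^4}\<close>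

lemma exp_neg_pow4_le_std_normal_density:
  "exp (- (x ^ 4)) \<le> exp 1 * sqrt (2 * pi) * std_normal_density (x::real)"
proof -
  have "- (x ^ 4) \<le> 1 - x\<^sup>2 / 2"
    using zero_le_power2[of "x\<^sup>2 - 1/4"] by (simp add: power2_eq_square power4_eq_xxxx algebra_simps)
  then have "exp (- (x ^ 4)) \<le> exp 1 * exp (- x\<^sup>2 / 2)"
    by (simp flip: exp_add)
  then show ?thesis by (simp add: std_normal_density_def)
qed

lemma integrable_poly_exp_neg_pow4: "integrable lborel (\<lambda>x::real. poly p x * exp (- (x ^ 4)))"
proof -
  have monomial: "integrable lborel (\<lambda>x::real. x ^ k * exp (- (x ^ 4)))" for k
  proof (rule Bochner_Integration.integrable_bound)
    show "integrable lborel (\<lambda>x. exp 1 * sqrt (2 * pi) * (std_normal_density x * \<bar>x\<bar> ^ k))"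
      using integrable_std_normal_moment_abs by (intro integrable_mult_right)
    have "\<bar>x\<bar> ^ k * exp (- (x ^ 4)) \<le> \<bar>x\<bar> ^ k * (exp 1 * sqrt (2 * pi) * std_normal_density x)"
      for x :: real
      by (intro mult_left_mono exp_neg_pow4_le_std_normal_density) simp
    then show "AE x in lborel. norm (x ^ k * exp (- (x ^ 4)))
            \<le> norm (exp 1 * sqrt (2 * pi) * (std_normal_density x * \<bar>x\<bar> ^ k))"
      by (intro AE_I2) (simp add: abs_mult power_abs mult_ac)
  qed measurable
  have "(\<lambda>x::real. poly p x * exp (- (x ^ 4))) = (\<lambda>x. \<Sum>i\<le>degree p. coeff p i * (x ^ i * exp (- (x ^ 4))))"
    by (simp add: poly_altdef sum_distrib_right mult.assoc)
  then show ?thesis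
    by (simp add: monomial)
qed

lemma integral_poly_exp_neg_pow4_pos:
  fixes q :: "real poly"
  assumes nonneg: "\<And>x. poly q x \<ge> 0" and "q \<noteq> 0"
  shows "(\<integral>x. poly q x * exp (- (x ^ 4)) \<partial>lborel) > 0"
proof -
  have nonroot: "AE x in lborel. poly q x \<noteq> 0"
    using AE_not_in[OF finite_imp_null_set_lborel[OF poly_roots_finite[OF \<open>q \<noteq> 0\<close>]]] by simp
  have "\<not> (AE x in lborel. poly q x * exp (- (x ^ 4)) = 0)"
  proof
    assume "AE x in lborel. poly q x * exp (- (x ^ 4)) = 0"
    with nonroot have "AE x::real in lborel. False" by (rule eventually_elim2) simp
    then show False
      using ae_filter_eq_bot_iff[of lborel] trivial_limit_def[of "ae_filter lborel"] by auto
  qed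
  then have "(\<integral>x. poly q x * exp (- (x ^ 4)) \<partial>lborel) \<noteq> 0"
    by (subst integral_nonneg_eq_0_iff_AE) (simp_all add: integrable_poly_exp_neg_pow4 nonneg)
  moreover have "(\<integral>x. poly q x * exp (- (x ^ 4)) \<partial>lborel) \<ge> 0"
    by (intro integral_nonneg_AE) (simp add: nonneg)
  ultimately show ?thesis by linarith
qed

section \<open>Even and odd polynomials\<close>

definition poly_parity :: "nat \<Rightarrow> 'a::comm_ring_1 poly \<Rightarrow> bool" where
  "poly_parity e p \<longleftrightarrow> p \<circ>\<^sub>p [:0, -1:] = smult ((-1) ^ e) p"

lemma poly_parity_iff:
  fixes p :: "'a::{idom, ring_char_0} poly"
  shows "poly_parity e p \<longleftrightarrow> (\<forall>x. poly p (- x) = (-1) ^ e * poly p x)"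
  unfolding poly_parity_def poly_eq_poly_eq_iff[symmetric] by (simp add: poly_pcompose fun_eq_iff)

lemma poly_parityD: "poly_parity e p \<Longrightarrow> poly p (- x) = (-1) ^ e * poly p x"
  unfolding poly_parity_def by (drule arg_cong[of _ _ "\<lambda>q. poly q x"]) (simp add: poly_pcompose)

lemma poly_parity_cong: "even (a + b) \<Longrightarrow> poly_parity a p \<longleftrightarrow> poly_parity b p"
  unfolding poly_parity_def by (metis even_add neg_one_even_power neg_one_odd_power)

lemma pcompose_reflect_reflect: "p \<circ>\<^sub>p [:0, -1:] \<circ>\<^sub>p [:0, -1:] = (p :: 'a::comm_ring_1 poly)"
  by (simp add: pcompose_assoc[symmetric] pcompose_pCons)

lemma degree_pcompose_reflect: "degree (p \<circ>\<^sub>p [:0, -1:]) = degree (p :: 'a::idom poly)"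
  by (simp add: degree_pcompose)

lemma poly_parity_mult: "poly_parity a p \<Longrightarrow> poly_parity b q \<Longrightarrow> poly_parity (a + b) (p * q)"
  unfolding poly_parity_def by (simp add: pcompose_mult power_add mult.commute)

lemma poly_parity_X2: "poly_parity 2 [:0, 0, 1:]"
  unfolding poly_parity_def by (simp add: pcompose_pCons)

lemma poly_parity_cancel:
  fixes p q :: "'a::idom poly"
  assumes p: "poly_parity a p" and pq: "poly_parity (a + b) (p * q)" and "p \<noteq> 0"
  shows "poly_parity b q"
proof -
  have "smult ((-1) ^ a) (p * (q \<circ>\<^sub>p [:0, -1:])) = (p * q) \<circ>\<^sub>p [:0, -1:]"
    using p by (simp add: poly_parity_def pcompose_mult)
  also have "\<dots> = smult ((-1) ^ a) (p * smult ((-1) ^ b) q)"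
    using pq by (simp add: poly_parity_def power_add)
  finally have "p * (q \<circ>\<^sub>p [:0, -1:]) = p * smult ((-1) ^ b) q"
    by (rule smult_cancel[rotated]) simp
  then show ?thesis
    unfolding poly_parity_def by (rule mult_left_cancel[THEN iffD1, OF \<open>p \<noteq> 0\<close>])
qed

lemma poly_parity_pderiv:
  fixes p :: "'a::idom poly"
  assumes "poly_parity e p"
  shows "poly_parity (Suc e) (pderiv p)"
proof -
  have "smult (-1) (pderiv p \<circ>\<^sub>p [:0, -1:]) = pderiv (p \<circ>\<^sub>p [:0, -1:])"
    by (simp add: pderiv_pcompose pderiv_pCons)
  also have "\<dots> = smult ((-1) ^ e) (pderiv p)"
    using assms by (simp add: poly_parity_def pderiv_smult)
  finally show ?thesis
    unfolding poly_parity_def by (metis minus_minus smult_minus_left smult_1_left power_Suc smult_smult)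
qed

lemma poly_parity_odd_poly_0:
  fixes p :: "'a::{idom, ring_char_0} poly"
  shows "poly_parity e p \<Longrightarrow> odd e \<Longrightarrow> poly p 0 = 0"
  using poly_parityD[of e p 0] by simp

lemma poly_parity_prod_symmetric:
  fixes A :: "'a::{idom, ring_char_0} set"
  assumes "finite A" and symmetric: "uminus ` A = A"
  shows "poly_parity (card A) (\<Prod>a\<in>A. [:- a, 1:])"
  unfolding poly_parity_iff
proof
  fix x :: 'a
  have "poly (\<Prod>a\<in>A. [:- a, 1:]) (- x) = (\<Prod>a\<in>A. (-1) * (x - - a))"
    unfolding poly_prod by (intro prod.cong) simp_all
  also have "\<dots> = (\<Prod>a\<in>A. -1) * (\<Prod>a\<in>A. x - - a)"
    by (rule prod.distrib)
  also have "\<dots> = (-1) ^ card A * (\<Prod>a\<in>uminus ` A. x - a)"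
    by (simp add: prod.reindex inj_on_def)
  also have "\<dots> = (-1) ^ card A * poly (\<Prod>a\<in>A. [:- a, 1:]) x"
    by (simp add: symmetric poly_prod)
  finally show "poly (\<Prod>a\<in>A. [:- a, 1:]) (- x) = (-1) ^ card A * poly (\<Prod>a\<in>A. [:- a, 1:]) x" .
qed

section \<open>Real zeros\<close>

lemma prod_linear_factors_dvd:
  fixes p :: "'a::idom poly"
  assumes "finite A" and "\<And>a. a \<in> A \<Longrightarrow> poly p a = 0"
  shows "(\<Prod>a\<in>A. [:- a, 1:]) dvd p"
  using assms
proof (induction A arbitrary: p rule: finite_induct)
  case (insert a A)
  then obtain r where r: "p = (\<Prod>b\<in>A. [:- b, 1:]) * r" by blast
  have "poly (\<Prod>b\<in>A. [:- b, 1:]) a \<noteq> 0"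
    using insert.hyps by (simp add: poly_prod)
  then have "poly r a = 0"
    using insert.prems[of a] r by simp
  then have "[:- a, 1:] dvd r"
    by (simp add: poly_eq_0_iff_dvd)
  then have "[:- a, 1:] * (\<Prod>b\<in>A. [:- b, 1:]) dvd p"
    unfolding r by (metis mult_dvd_mono dvd_refl mult.commute)
  then show ?case
    by (simp only: prod.insert[OF insert.hyps])
qed simp

lemma pderiv_opposite_signs_at_adjacent_roots:
  fixes f :: "real poly"
  assumes "a < b" and "poly f a = 0" and "poly f b = 0"
    and no_root: "\<And>x. a < x \<Longrightarrow> x < b \<Longrightarrow> poly f x \<noteq> 0"
    and "poly (pderiv f) a \<noteq> 0" and "poly (pderiv f) b \<noteq> 0"
  shows "poly (pderiv f) a * poly (pderiv f) b < 0"
proof -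
  define q where "q = [:- a, 1:] * [:- b, 1:]"
  obtain g where g: "f = [:- a, 1:] * g"
    using \<open>poly f a = 0\<close> by (auto simp: poly_eq_0_iff_dvd)
  then have "poly g b = 0"
    using \<open>poly f b = 0\<close> \<open>a < b\<close> by simp
  then obtain r where "g = [:- b, 1:] * r"
    by (auto simp: poly_eq_0_iff_dvd)
  with g have f: "f = q * r"
    by (simp only: q_def mult.assoc)
  have "poly q x = (x - a) * (x - b)" "poly (pderiv q) x = 2 * x - a - b" for x
    by (simp_all add: q_def pderiv_mult pderiv_pCons algebra_simps)
  then have "poly (pderiv f) x = (x - a) * (x - b) * poly (pderiv r) x + (2 * x - a - b) * poly r x" for x
    by (simp add: f pderiv_mult)
  then have f'a: "poly (pderiv f) a = (a - b) * poly r a" and f'b: "poly (pderiv f) b = (b - a) * poly r b"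
    by simp_all
  have "poly r a * poly r b > 0"
  proof (rule ccontr)
    assume "\<not> poly r a * poly r b > 0"
    moreover have "poly r a \<noteq> 0" "poly r b \<noteq> 0"
      using f'a f'b assms(5,6) by auto
    ultimately have "poly r a * poly r b < 0"
      by (simp add: linorder_not_less le_less)
    then obtain x where "a < x" "x < b" "poly r x = 0"
      using poly_IVT[OF \<open>a < b\<close>] by blast
    then show False
      using no_root[of x] f \<open>poly q x = (x - a) * (x - b)\<close> by simp
  qed
  moreover have "poly (pderiv f) a * poly (pderiv f) b = - ((b - a)\<^sup>2 * (poly r a * poly r b))"
    unfolding f'a f'b by (simp add: power2_eq_square algebra_simps)
  ultimately show ?thesis
    using \<open>a < b\<close> by simp
qed

lemma even_poly_constant_sign:
  fixes T :: "real poly"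
  assumes "poly_parity 0 T" and no_pos_root: "\<And>x. x > 0 \<Longrightarrow> poly T x \<noteq> 0"
  shows "poly T 1 * poly T x \<ge> 0"
proof (rule ccontr)
  assume "\<not> poly T 1 * poly T x \<ge> 0"
  then have "poly T 1 * poly T \<bar>x\<bar> < 0"
    using poly_parityD[OF assms(1), of x] by (cases "x \<ge> 0") auto
  then obtain c where "c > min 1 \<bar>x\<bar>" "poly T c = 0"
    using poly_IVT[of 1 "\<bar>x\<bar>" T] poly_IVT[of "\<bar>x\<bar>" 1 T]
    by (cases "1 < \<bar>x\<bar>") (auto simp: mult.commute linorder_not_less le_less)
  then show False
    using no_pos_root[of c] by simp
qed

lemma poly_map_poly_of_real: "poly (map_poly of_real p) (of_real x) = of_real (poly p x)"
  by (induction p) (simp_all add: map_poly_pCons)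

lemma complex_roots_real_if_card_real_roots:
  fixes p :: "real poly"
  assumes "p \<noteq> 0" and "finite S" and "card S = degree p" and roots: "\<And>x. x \<in> S \<Longrightarrow> poly p x = 0"
    and z: "poly (map_poly complex_of_real p) z = 0"
  shows "Im z = 0"
proof (rule ccontr)
  assume "Im z \<noteq> 0"
  let ?pc = "map_poly complex_of_real p"
  have "?pc \<noteq> 0" "degree ?pc = degree p"
    using \<open>p \<noteq> 0\<close> by (simp_all add: degree_map_poly map_poly_eq_0_iff)
  have "z \<notin> of_real ` S"
    using \<open>Im z \<noteq> 0\<close> by auto
  then have "degree p + 1 = card (insert z (of_real ` S))"
    using \<open>finite S\<close> \<open>card S = degree p\<close> by (simp add: card_image inj_on_def)
  also have "\<dots> \<le> card {w. poly ?pc w = 0}"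
    using roots z by (intro card_mono poly_roots_finite \<open>?pc \<noteq> 0\<close>) (auto simp: poly_map_poly_of_real)
  also have "\<dots> \<le> degree p"
    using card_poly_roots_bound[OF \<open>?pc \<noteq> 0\<close>] \<open>degree ?pc = degree p\<close> by simp
  finally show False by simp
qed

lemma sorted_list_of_set_nth_less:
  fixes S :: "'a::linorder set"
  shows "i < j \<Longrightarrow> j < card S \<Longrightarrow> sorted_list_of_set S ! i < sorted_list_of_set S ! j"
  using sorted_wrt_nth_less[OF strict_sorted_list_of_set] by simp

lemma not_in_between_sorted_list_of_set_nth:
  fixes S :: "'a::linorder set"
  assumes "finite S" and "Suc i < card S"
    and "sorted_list_of_set S ! i < x" and "x < sorted_list_of_set S ! Suc i"
  shows "x \<notin> S"
proof
  assume "x \<in> S"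
  then obtain j where j: "j < card S" "x = sorted_list_of_set S ! j"
    using \<open>finite S\<close> by (metis in_set_conv_nth length_sorted_list_of_set set_sorted_list_of_set)
  show False
  proof (cases "j \<le> i")
    case True
    then show ?thesis
      using assms j sorted_list_of_set_nth_less[of j i S] by (cases "j = i") auto
  next
    case False
    then show ?thesis
      using assms j sorted_list_of_set_nth_less[of "Suc i" j S] by (cases "j = Suc i") auto
  qed
qed

lemma sorted_list_of_set_interlace:
  fixes A B :: "'a::linorder set"
  assumes "finite A" and "finite B" and card: "card B + 1 = card A"
    and gap: "\<And>i. Suc i < card A \<Longrightarrow>
                \<exists>b\<in>B. sorted_list_of_set A ! i < b \<and> b < sorted_list_of_set A ! Suc i"
  shows "\<forall>i < card B. sorted_list_of_set A ! i < sorted_list_of_set B ! i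
                      \<and> sorted_list_of_set B ! i < sorted_list_of_set A ! Suc i"
proof -
  let ?ys = "sorted_list_of_set A"
  define \<phi> where "\<phi> i = (SOME b. b \<in> B \<and> ?ys ! i < b \<and> b < ?ys ! Suc i)" for i
  have \<phi>: "\<phi> i \<in> B \<and> ?ys ! i < \<phi> i \<and> \<phi> i < ?ys ! Suc i" if "i < card B" for i
  proof -
    have "Suc i < card A"
      using that card by simp
    then have "\<exists>b. b \<in> B \<and> ?ys ! i < b \<and> b < ?ys ! Suc i"
      using gap by blast
    then show ?thesis
      unfolding \<phi>_def by (rule someI_ex)
  qed
  define xs where "xs = map \<phi> [0..<card B]"
  have "sorted_wrt (<) xs"
    unfolding sorted_wrt_iff_nth_less
  proof (intro allI impI)
    fix i j assume "i < j" "j < length xs"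
    then have "?ys ! Suc i \<le> ?ys ! j"
      using card sorted_list_of_set_nth_less[of "Suc i" j A] by (cases "Suc i = j") (auto simp: xs_def)
    then show "xs ! i < xs ! j"
      using \<phi>[of i] \<phi>[of j] \<open>i < j\<close> \<open>j < length xs\<close> by (auto simp: xs_def)
  qed
  moreover have "set xs = B"
  proof (rule card_subset_eq[OF \<open>finite B\<close>])
    show "set xs \<subseteq> B"
      using \<phi> by (auto simp: xs_def)
    show "card (set xs) = card B"
      using distinct_card \<open>sorted_wrt (<) xs\<close> by (fastforce simp: strict_sorted_iff xs_def)
  qed
  ultimately have "sorted_list_of_set B = xs"
    using \<open>finite B\<close> by (intro strict_sorted_equal) simp_all
  then show ?thesis
    using \<phi> by (simp add: xs_def)
qed

section \<open>The Sobolev inner product\<close>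

lemma sob_ip_commute: "sob_ip l1 l2 f g = sob_ip l1 l2 g f"
  unfolding sob_ip_def by (simp add: mult_ac)

lemma sob_ip_0_left [simp]: "sob_ip l1 l2 0 g = 0"
  unfolding sob_ip_def by simp

lemma sob_ip_add_left: "sob_ip l1 l2 (f + g) h = sob_ip l1 l2 f h + sob_ip l1 l2 g h"
proof -
  have integrable: "integrable lborel (\<lambda>x. poly p x * poly h x * exp (- (x ^ 4)))" for p
    using integrable_poly_exp_neg_pow4[of "p * h"] by simp
  have "(\<integral>x. poly (f + g) x * poly h x * exp (- (x ^ 4)) \<partial>lborel)
      = (\<integral>x. poly f x * poly h x * exp (- (x ^ 4)) + poly g x * poly h x * exp (- (x ^ 4)) \<partial>lborel)"
    by (simp add: algebra_simps)
  also have "\<dots> = (\<integral>x. poly f x * poly h x * exp (- (x ^ 4)) \<partial>lborel)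
                   + (\<integral>x. poly g x * poly h x * exp (- (x ^ 4)) \<partial>lborel)"
    by (intro Bochner_Integration.integral_add integrable)
  finally show ?thesis unfolding sob_ip_def by (simp add: algebra_simps pderiv_add)
qed

lemma sob_ip_smult_left: "sob_ip l1 l2 (smult c f) g = c * sob_ip l1 l2 f g"
  unfolding sob_ip_def by (simp add: pderiv_smult algebra_simps)

lemma sob_ip_smult_right: "sob_ip l1 l2 f (smult c g) = c * sob_ip l1 l2 f g"
  by (simp add: sob_ip_commute[of l1 l2 f] sob_ip_smult_left)

lemma sob_ip_diff_left: "sob_ip l1 l2 (f - g) h = sob_ip l1 l2 f h - sob_ip l1 l2 g h"
  using sob_ip_add_left[of l1 l2 "f - g" g h] by simp

lemma sob_ip_sum_left: "sob_ip l1 l2 (\<Sum>k\<in>A. F k) g = (\<Sum>k\<in>A. sob_ip l1 l2 (F k) g)"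
  by (induction A rule: infinite_finite_induct) (simp_all add: sob_ip_add_left)

lemma sob_ip_X2_left:
  "sob_ip l1 l2 ([:0, 0, 1:] * f) g = (\<integral>x. x\<^sup>2 * (poly f x * poly g x * exp (- (x ^ 4))) \<partial>lborel)"
  unfolding sob_ip_def by (simp add: pderiv_mult pderiv_pCons algebra_simps power2_eq_square)

lemma sob_ip_X2_commute: "sob_ip l1 l2 ([:0, 0, 1:] * f) g = sob_ip l1 l2 f ([:0, 0, 1:] * g)"
  using sob_ip_X2_left[of l1 l2 f g] sob_ip_X2_left[of l1 l2 g f]
  by (simp add: sob_ip_commute[of l1 l2 f] mult_ac)

lemma sob_ip_reflect:
  "sob_ip l1 l2 (f \<circ>\<^sub>p [:0, -1:]) (g \<circ>\<^sub>p [:0, -1:]) = sob_ip l1 l2 f g"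
proof -
  have "(\<integral>x. poly f (- x) * poly g (- x) * exp (- ((- x) ^ 4)) \<partial>lborel)
      = (\<integral>x. poly f x * poly g x * exp (- (x ^ 4)) \<partial>lborel)"
    using lborel_integral_real_affine[of "-1" "\<lambda>x. poly f x * poly g x * exp (- (x ^ 4))" 0] by simp
  then show ?thesis
    unfolding sob_ip_def by (simp add: poly_pcompose pderiv_pcompose pderiv_pCons)
qed

lemma sob_ip_eq_0_if_opposite_parity:
  assumes "poly_parity a p" and "poly_parity b q" and "odd (a + b)"
  shows "sob_ip l1 l2 p q = 0"
proof -
  have "sob_ip l1 l2 p q = sob_ip l1 l2 (p \<circ>\<^sub>p [:0, -1:]) (q \<circ>\<^sub>p [:0, -1:])"
    by (rule sob_ip_reflect[symmetric])
  also have "\<dots> = (-1) ^ (a + b) * sob_ip l1 l2 p q"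
    using assms(1,2) by (simp add: poly_parity_def sob_ip_smult_left sob_ip_smult_right power_add)
  finally show ?thesis
    using \<open>odd (a + b)\<close> by simp
qed

lemma sob_ip_mult_self_pos:
  assumes "l1 \<ge> 0" "l2 \<ge> 0"
    and T_nonneg: "\<And>x. poly T x \<ge> 0" and T'0: "poly (pderiv T) 0 = 0"
    and "T \<noteq> 0" "P \<noteq> 0"
  shows "sob_ip l1 l2 (T * P) P > 0"
proof -
  have "(\<integral>x. poly (T * P * P) x * exp (- (x ^ 4)) \<partial>lborel) > 0"
    using T_nonneg \<open>T \<noteq> 0\<close> \<open>P \<noteq> 0\<close>
    by (intro integral_poly_exp_neg_pow4_pos) (auto simp: mult.assoc)
  moreover have "sob_ip l1 l2 (T * P) P
      = (\<integral>x. poly (T * P * P) x * exp (- (x ^ 4)) \<partial>lborel)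
        + l1 * poly T 0 * (poly P 0)\<^sup>2 + l2 * poly T 0 * (poly (pderiv P) 0)\<^sup>2"
    unfolding sob_ip_def using T'0 by (simp add: pderiv_mult power2_eq_square algebra_simps)
  ultimately show ?thesis
    using assms T_nonneg[of 0] by (smt (verit) mult_nonneg_nonneg zero_le_power2)
qed

lemma sob_ip_even_factor_pos:
  assumes "l1 \<ge> 0" "l2 \<ge> 0"
    and T_even: "poly_parity 0 T" and no_pos_root: "\<And>x. x > 0 \<Longrightarrow> poly T x \<noteq> 0"
    and "P \<noteq> 0"
  shows "poly T 1 * sob_ip l1 l2 (T * P) P > 0"
proof -
  have "sob_ip l1 l2 (smult (poly T 1) T * P) P > 0"
  proof (rule sob_ip_mult_self_pos[OF assms(1,2) _ _ _ \<open>P \<noteq> 0\<close>])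
    show "poly (smult (poly T 1) T) x \<ge> 0" for x
      using even_poly_constant_sign[OF T_even no_pos_root] by simp
    show "poly (pderiv (smult (poly T 1) T)) 0 = 0"
      using poly_parity_odd_poly_0[OF poly_parity_pderiv[OF T_even]] by (simp add: pderiv_smult)
    show "smult (poly T 1) T \<noteq> 0"
      using no_pos_root[of 1] by auto
  qed
  then show ?thesis
    by (simp add: sob_ip_smult_left)
qed

section \<open>Orthonormal Sobolev polynomials\<close>

lemma degree_X2_mult: "p \<noteq> 0 \<Longrightarrow> degree ([:0, 0, 1:] * p) = degree p + 2"
  for p :: "'a::idom poly"
  by (simp add: degree_mult_eq)

definition pos_roots :: "real poly \<Rightarrow> real set" where
  "pos_roots p = {y. 0 < y \<and> poly p y = 0}"

lemma finite_pos_roots: "p \<noteq> 0 \<Longrightarrow> finite (pos_roots p)"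
  unfolding pos_roots_def using poly_roots_finite by (rule finite_subset[rotated]) auto

locale sobolev_orthonormal =
  fixes l1 l2 :: real and Q :: "nat \<Rightarrow> real poly"
  assumes l1_nonneg: "l1 \<ge> 0" and l2_nonneg: "l2 \<ge> 0"
    and degree_Q: "\<And>n. degree (Q n) = n"
    and lead_coeff_Q_pos: "\<And>n. lead_coeff (Q n) > 0"
    and orthonormal: "\<And>n m. sob_ip l1 l2 (Q n) (Q m) = (if n = m then 1 else 0)"
begin

abbreviation ip :: "real poly \<Rightarrow> real poly \<Rightarrow> real" where
  "ip \<equiv> sob_ip l1 l2"

lemma Q_nonzero: "Q n \<noteq> 0"
  using lead_coeff_Q_pos[of n] by auto

lemma Q_span: "degree p \<le> n \<Longrightarrow> \<exists>c. p = (\<Sum>k\<le>n. smult (c k) (Q k))"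
proof (induction n arbitrary: p)
  case 0
  then obtain a where "p = [:a:]"
    by (metis degree_eq_zeroE le_zero_eq)
  moreover obtain b where "Q 0 = [:b:]" "b \<noteq> 0"
    using degree_Q[of 0] Q_nonzero[of 0] by (metis degree_eq_zeroE pCons_0_0)
  ultimately show ?case
    by (intro exI[of _ "\<lambda>_. a / b"]) simp
next
  case (Suc n)
  define c where "c = coeff p (Suc n) / lead_coeff (Q (Suc n))"
  have "degree (p - smult c (Q (Suc n))) \<le> n"
  proof (rule degree_le, intro allI impI)
    fix i assume "n < i"
    then consider "i = Suc n" | "i > Suc n" by linarith
    then show "coeff (p - smult c (Q (Suc n))) i = 0"
      using Suc.prems lead_coeff_Q_pos[of "Suc n"] degree_Q[of "Suc n"]
      by cases (simp_all add: c_def coeff_eq_0)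
  qed
  then obtain d where "p - smult c (Q (Suc n)) = (\<Sum>k\<le>n. smult (d k) (Q k))"
    using Suc.IH by blast
  then have "p = (\<Sum>k\<le>Suc n. smult ((d(Suc n := c)) k) (Q k))"
    by (simp add: algebra_simps)
  then show ?case by blast
qed

lemma ip_sum_Q: "finite A \<Longrightarrow> ip (\<Sum>k\<in>A. smult (c k) (Q k)) (Q j) = (if j \<in> A then c j else 0)"
  by (simp add: sob_ip_sum_left sob_ip_smult_left orthonormal if_distrib cong: if_cong)

lemma Q_expansion: "degree p \<le> n \<Longrightarrow> p = (\<Sum>k\<le>n. smult (ip p (Q k)) (Q k))"
  using Q_span[of p n] by (auto simp: ip_sum_Q intro!: sum.cong)

lemma eq_0_if_orthogonal_Q:
  assumes "degree p \<le> n" and "\<And>k. k \<le> n \<Longrightarrow> ip p (Q k) = 0"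
  shows "p = 0"
proof -
  have "p = (\<Sum>k\<le>n. smult (ip p (Q k)) (Q k))"
    using assms(1) by (rule Q_expansion)
  also have "\<dots> = 0"
    using assms(2) by simp
  finally show ?thesis .
qed

lemma eq_smult_Q_if_orthogonal_lower:
  assumes "degree p \<le> n" and "\<And>k. k < n \<Longrightarrow> ip p (Q k) = 0"
  shows "p = smult (ip p (Q n)) (Q n)"
proof -
  have "p = (\<Sum>k\<in>insert n {..<n}. smult (ip p (Q k)) (Q k))"
    using Q_expansion[OF assms(1)] by (simp only: lessThan_Suc_atMost[symmetric] lessThan_Suc)
  also have "\<dots> = smult (ip p (Q n)) (Q n)"
    using assms(2) by simp
  finally show ?thesis .
qed

lemma ip_Q_lower_degree:
  assumes "degree p < n"
  shows "ip p (Q n) = 0"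
proof -
  have "ip p (Q n) = ip (\<Sum>k\<le>n - 1. smult (ip p (Q k)) (Q k)) (Q n)"
    using Q_expansion[of p "n - 1"] assms by (simp only: Suc_pred' less_Suc_eq_le)
  also have "\<dots> = 0"
    using assms by (subst ip_sum_Q) auto
  finally show ?thesis .
qed

lemma Q_parity: "poly_parity n (Q n)"
proof -
  define R where "R = smult ((-1) ^ n) (Q n \<circ>\<^sub>p [:0, -1:])"
  have "degree R = n"
    by (simp add: R_def degree_pcompose_reflect degree_Q)
  moreover have "ip R (Q k) = 0" if "k < n" for k
  proof -
    have "ip (Q n \<circ>\<^sub>p [:0, -1:]) (Q k) = ip (Q n) (Q k \<circ>\<^sub>p [:0, -1:])"
      using sob_ip_reflect[of l1 l2 "Q n" "Q k \<circ>\<^sub>p [:0, -1:]"] by (simp add: pcompose_reflect_reflect)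
    also have "\<dots> = 0"
      using that by (simp add: sob_ip_commute[of l1 l2 "Q n"] ip_Q_lower_degree degree_pcompose_reflect degree_Q)
    finally show ?thesis by (simp add: R_def sob_ip_smult_left)
  qed
  ultimately have R: "R = smult (ip R (Q n)) (Q n)"
    by (intro eq_smult_Q_if_orthogonal_lower) simp_all
  have "lead_coeff R = lead_coeff (Q n)"
    using lead_coeff_comp[of "[:0, -1::real:]" "Q n"]
    by (simp add: R_def degree_Q degree_pcompose_reflect flip: power_mult_distrib)
  then have "ip R (Q n) = 1"
    using R lead_coeff_Q_pos[of n] by (metis lead_coeff_smult mult_cancel_right2 less_irrefl)
  then have "R = Q n"
    using R by simp
  moreover have "Q n \<circ>\<^sub>p [:0, -1:] = smult ((-1) ^ n) R"
    by (simp add: R_def flip: power_mult_distrib)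
  ultimately show ?thesis
    unfolding poly_parity_def by simp
qed

lemma ip_X2_Q_eq_0:
  assumes "k + 2 < n \<or> n + 2 < k \<or> odd (n + k)"
  shows "ip ([:0, 0, 1:] * Q n) (Q k) = 0"
proof -
  consider "k + 2 < n" | "n + 2 < k" | "odd (n + k)"
    using assms by blast
  then show ?thesis
  proof cases
    case 1
    then have "ip ([:0, 0, 1:] * Q k) (Q n) = 0"
      by (intro ip_Q_lower_degree) (simp add: degree_X2_mult Q_nonzero degree_Q)
    then show ?thesis
      by (simp only: sob_ip_X2_commute sob_ip_commute[of l1 l2 "Q n"])
  next
    case 2
    then show ?thesis
      by (intro ip_Q_lower_degree) (simp add: degree_X2_mult Q_nonzero degree_Q)
  next
    case 3
    then show ?thesis
      by (intro sob_ip_eq_0_if_opposite_parity[of "2 + n" _ k] poly_parity_mult poly_parity_X2 Q_parity) simp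
  qed
qed

definition \<alpha> :: "nat \<Rightarrow> real" where
  "\<alpha> n = ip ([:0, 0, 1:] * Q n) (Q (n + 2))"

definition \<beta> :: "nat \<Rightarrow> real" where
  "\<beta> n = ip ([:0, 0, 1:] * Q n) (Q n)"

lemma \<alpha>_alt_def: "\<alpha> n = ip ([:0, 0, 1:] * Q (n + 2)) (Q n)"
  unfolding \<alpha>_def by (simp only: sob_ip_X2_commute sob_ip_commute[of l1 l2 "Q n"])

theorem three_term_recurrence:
  "[:0, 0, 1:] * Q n = smult (\<alpha> n) (Q (n + 2)) + smult (\<beta> n) (Q n)
                         + (if n \<ge> 2 then smult (\<alpha> (n - 2)) (Q (n - 2)) else 0)"
    (is "_ = ?R")
proof -
  have "[:0, 0, 1:] * Q n - ?R = 0"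
  proof (rule eq_0_if_orthogonal_Q)
    show "degree ([:0, 0, 1:] * Q n - ?R) \<le> n + 2"
      by (intro degree_diff_le degree_add_le)
         (auto simp: degree_X2_mult Q_nonzero degree_Q)
    fix k
    have "k = n + 2 \<or> k = n \<or> (n \<ge> 2 \<and> k = n - 2) \<or> k + 2 < n \<or> n + 2 < k \<or> odd (n + k)"
      by presburger
    then consider "k = n + 2" | "k = n" | "n \<ge> 2" "k = n - 2" | "k + 2 < n \<or> n + 2 < k \<or> odd (n + k)"
      by blast
    then show "ip ([:0, 0, 1:] * Q n - ?R) (Q k) = 0"
    proof cases
      case 3
      then obtain m where "n = m + 2" "k = m"
        by (metis le_add_diff_inverse2)
      then show ?thesis
        using \<alpha>_alt_def[of m]
        by (simp add: sob_ip_diff_left sob_ip_add_left sob_ip_smult_left orthonormal)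
    next
      case 4
      then have "k \<noteq> n + 2" "k \<noteq> n" "n \<ge> 2 \<longrightarrow> k \<noteq> n - 2" "ip ([:0, 0, 1:] * Q n) (Q k) = 0"
        using ip_X2_Q_eq_0 by auto
      then show ?thesis
        by (auto simp: sob_ip_diff_left sob_ip_add_left sob_ip_smult_left orthonormal)
    qed (auto simp: \<alpha>_def \<beta>_def sob_ip_diff_left sob_ip_add_left sob_ip_smult_left orthonormal)
  qed
  then show ?thesis by simp
qed

lemma \<alpha>_pos: "\<alpha> n > 0"
proof -
  have "coeff ([:0, 0, 1:] * Q n) (n + 2) = lead_coeff (Q n)"
    by (simp add: degree_Q)
  moreover have "coeff ([:0, 0, 1:] * Q n) (n + 2) = \<alpha> n * lead_coeff (Q (n + 2))"
    by (subst three_term_recurrence) (simp add: degree_Q coeff_eq_0)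
  ultimately show ?thesis
    using lead_coeff_Q_pos[of n] lead_coeff_Q_pos[of "n + 2"] by (metis zero_less_mult_pos2)
qed

definition wronskian :: "nat \<Rightarrow> real poly" where
  "wronskian n = pderiv (Q (n + 2)) * Q n - pderiv (Q n) * Q (n + 2)"

lemma wronskian_recurrence:
  "\<alpha> n * poly (wronskian n) x
     = 2 * x * (poly (Q n) x)\<^sup>2 + (if n \<ge> 2 then \<alpha> (n - 2) * poly (wronskian (n - 2)) x else 0)"
proof -
  define H where "H = (if n \<ge> 2 then smult (\<alpha> (n - 2)) (Q (n - 2)) else 0)"
  let ?q = "poly (Q n) x" and ?q' = "poly (pderiv (Q n)) x"
  have rec: "[:0, 0, 1:] * Q n = smult (\<alpha> n) (Q (n + 2)) + smult (\<beta> n) (Q n) + H"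
    unfolding H_def by (rule three_term_recurrence)
  have val: "\<alpha> n * poly (Q (n + 2)) x = x\<^sup>2 * ?q - \<beta> n * ?q - poly H x"
    using arg_cong[OF rec, of "\<lambda>p. poly p x"] by (simp add: power2_eq_square algebra_simps)
  have deriv: "\<alpha> n * poly (pderiv (Q (n + 2))) x = 2 * x * ?q + x\<^sup>2 * ?q' - \<beta> n * ?q' - poly (pderiv H) x"
    using arg_cong[OF rec, of "\<lambda>p. poly (pderiv p) x"]
    by (simp add: pderiv_add pderiv_smult pderiv_mult pderiv_pCons power2_eq_square algebra_simps)
  have "\<alpha> n * poly (wronskian n) x
      = (\<alpha> n * poly (pderiv (Q (n + 2))) x) * ?q - ?q' * (\<alpha> n * poly (Q (n + 2)) x)"
    by (simp add: wronskian_def algebra_simps)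
  also have "\<dots> = 2 * x * ?q\<^sup>2 + (?q' * poly H x - poly (pderiv H) x * ?q)"
    unfolding val deriv by (simp add: power2_eq_square algebra_simps)
  also have "?q' * poly H x - poly (pderiv H) x * ?q
      = (if n \<ge> 2 then \<alpha> (n - 2) * poly (wronskian (n - 2)) x else 0)"
  proof (cases "n \<ge> 2")
    case True
    then obtain m where "n = m + 2"
      by (metis le_add_diff_inverse2)
    then show ?thesis
      by (simp add: H_def wronskian_def pderiv_smult algebra_simps)
  qed (simp add: H_def)
  finally show ?thesis .
qed

lemma poly_Q_pos_if_less_2:
  assumes "n < 2" and "x > 0"
  shows "poly (Q n) x > 0"
proof -
  have "poly (Q n) x = (\<Sum>i\<le>n. coeff (Q n) i * x ^ i)"
    by (simp add: poly_altdef degree_Q)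
  moreover have "coeff (Q 1) 0 = 0"
    using poly_parity_odd_poly_0[OF Q_parity[of 1]] by (simp add: poly_0_coeff_0)
  ultimately have "poly (Q n) x = lead_coeff (Q n) * x ^ n"
    using \<open>n < 2\<close> by (cases n) (simp_all add: degree_Q)
  then show ?thesis
    using lead_coeff_Q_pos[of n] \<open>x > 0\<close> by simp
qed

lemma wronskian_pos: "x > 0 \<Longrightarrow> poly (wronskian n) x > 0"
proof (induction n rule: less_induct)
  case (less n)
  have "\<alpha> n * poly (wronskian n) x > 0"
  proof (cases "n \<ge> 2")
    case True
    then have "\<alpha> (n - 2) * poly (wronskian (n - 2)) x > 0"
      using less \<alpha>_pos by simp
    moreover have "2 * x * (poly (Q n) x)\<^sup>2 \<ge> 0"
      using \<open>x > 0\<close> by simp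
    ultimately show ?thesis
      using wronskian_recurrence[of n x] True by simp
  next
    case False
    then have "2 * x * (poly (Q n) x)\<^sup>2 > 0"
      using poly_Q_pos_if_less_2[of n x] \<open>x > 0\<close> by simp
    then show ?thesis
      using wronskian_recurrence[of n x] False by simp
  qed
  then show ?case
    using \<alpha>_pos[of n] by (simp add: zero_less_mult_iff)
qed

lemma pderiv_Q_times_Q_pos_at_pos_root:
  "y \<in> pos_roots (Q (n + 2)) \<Longrightarrow> poly (pderiv (Q (n + 2))) y * poly (Q n) y > 0"
  using wronskian_pos[of y n] by (simp add: pos_roots_def wronskian_def)

lemma cofactor_no_pos_root:
  assumes "Q (n + 2) = P * T" and "pos_roots (Q (n + 2)) \<subseteq> {x. poly P x = 0}" and "x > 0"
  shows "poly T x \<noteq> 0"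
proof (cases "x \<in> pos_roots (Q (n + 2))")
  case True
  then have "poly (pderiv (Q (n + 2))) x = poly (pderiv P) x * poly T x"
    using assms(1,2) by (auto simp: pderiv_mult)
  then show ?thesis
    using pderiv_Q_times_Q_pos_at_pos_root[OF True] by auto
next
  case False
  then show ?thesis
    using assms(1,3) by (simp add: pos_roots_def)
qed

text \<open>0 is included exactly for odd n, so that the product of the corresponding linear factors
  has the parity of n.\<close>

definition sym_roots :: "nat \<Rightarrow> real set" where
  "sym_roots n = pos_roots (Q n) \<union> uminus ` pos_roots (Q n) \<union> (if odd n then {0} else {})"

lemma finite_sym_roots: "finite (sym_roots n)"
  by (simp add: sym_roots_def finite_pos_roots Q_nonzero)

lemma uminus_sym_roots: "uminus ` sym_roots n = sym_roots n"
  unfolding sym_roots_def by (auto simp: image_Un image_image)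

lemma poly_Q_sym_roots: "a \<in> sym_roots n \<Longrightarrow> poly (Q n) a = 0"
  using poly_parityD[OF Q_parity[of n]] poly_parity_odd_poly_0[OF Q_parity[of n]]
  by (auto simp: sym_roots_def pos_roots_def split: if_splits)

lemma card_sym_roots_eq: "card (sym_roots n) = 2 * card (pos_roots (Q n)) + n mod 2"
proof -
  let ?Z = "pos_roots (Q n)"
  have fin: "finite ?Z"
    by (simp add: finite_pos_roots Q_nonzero)
  have "card (sym_roots n) = card (?Z \<union> uminus ` ?Z) + card (if odd n then {0::real} else {})"
    unfolding sym_roots_def using fin by (intro card_Un_disjoint) (auto simp: pos_roots_def)
  also have "card (?Z \<union> uminus ` ?Z) = card ?Z + card (uminus ` ?Z)"
    using fin by (intro card_Un_disjoint) (auto simp: pos_roots_def)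
  finally show ?thesis
    by (simp add: card_image odd_iff_mod_2_eq_one)
qed

lemma card_pos_roots_le: "card (pos_roots (Q n)) \<le> n div 2"
proof -
  have "card (sym_roots n) \<le> card {x. poly (Q n) x = 0}"
    using poly_Q_sym_roots by (intro card_mono poly_roots_finite Q_nonzero) auto
  also have "\<dots> \<le> n"
    using card_poly_roots_bound[OF Q_nonzero[of n]] by (simp add: degree_Q)
  finally show ?thesis
    by (simp add: card_sym_roots_eq)
qed

lemma sym_roots_cofactor_even:
  assumes "Q n = (\<Prod>a\<in>sym_roots n. [:- a, 1:]) * T"
  shows "poly_parity 0 T"
proof -
  let ?P = "\<Prod>a\<in>sym_roots n. [:- a, 1:]"
  have "poly_parity n ?P"
    using poly_parity_prod_symmetric[OF finite_sym_roots uminus_sym_roots, of n]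
    by (rule poly_parity_cong[THEN iffD1, rotated]) (simp add: card_sym_roots_eq)
  moreover have "poly_parity (n + 0) (?P * T)"
    using Q_parity[of n] unfolding assms by simp
  moreover have "?P \<noteq> 0"
    using Q_nonzero[of n] unfolding assms by auto
  ultimately show ?thesis
    by (rule poly_parity_cancel)
qed

lemma card_pos_roots_ge: "n div 2 \<le> card (pos_roots (Q n))"
proof (rule ccontr)
  assume "\<not> n div 2 \<le> card (pos_roots (Q n))"
  then have card_less: "card (sym_roots n) < n" and "n \<ge> 2"
    by (simp_all add: card_sym_roots_eq)
  then obtain m where n: "n = m + 2"
    by (metis le_add_diff_inverse2)
  define P where "P = (\<Prod>a\<in>sym_roots n. [:- a, 1:])"
  have "P dvd Q n"
    unfolding P_def using finite_sym_roots poly_Q_sym_roots by (rule prod_linear_factors_dvd)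
  then obtain T where QPT: "Q n = P * T"
    by (rule dvdE)
  have "pos_roots (Q n) \<subseteq> sym_roots n"
    by (auto simp: sym_roots_def)
  then have "pos_roots (Q n) \<subseteq> {x. poly P x = 0}"
    using finite_sym_roots by (auto simp: P_def poly_prod)
  with QPT have "poly T x \<noteq> 0" if "x > 0" for x
    using that unfolding n by (rule cofactor_no_pos_root)
  moreover have "poly_parity 0 T"
    using QPT unfolding P_def by (rule sym_roots_cofactor_even)
  moreover have "P \<noteq> 0"
    using Q_nonzero[of n] unfolding QPT by auto
  ultimately have "poly T 1 * ip (T * P) P > 0"
    by (intro sob_ip_even_factor_pos l1_nonneg l2_nonneg)
  moreover have "ip P (Q n) = 0"
    using card_less finite_sym_roots by (intro ip_Q_lower_degree) (simp add: P_def degree_prod_sum_eq)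
  ultimately show False
    by (simp add: QPT sob_ip_commute[of l1 l2 P] mult.commute)
qed

lemma card_pos_roots: "card (pos_roots (Q n)) = n div 2"
  using card_pos_roots_le card_pos_roots_ge by (rule antisym)

lemma Q_complex_roots_real:
  assumes "poly (map_poly complex_of_real (Q n)) z = 0"
  shows "Im z = 0"
  by (rule complex_roots_real_if_card_real_roots[OF Q_nonzero finite_sym_roots _ poly_Q_sym_roots assms])
     (simp add: card_sym_roots_eq card_pos_roots degree_Q)

lemma root_between_adjacent_pos_roots:
  fixes n i :: nat
  defines "ys \<equiv> sorted_list_of_set (pos_roots (Q (n + 2)))"
  assumes i: "Suc i < card (pos_roots (Q (n + 2)))"
  shows "\<exists>c\<in>pos_roots (Q n). ys ! i < c \<and> c < ys ! Suc i"
proof -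
  let ?Z = "pos_roots (Q (n + 2))"
  have fin: "finite ?Z"
    by (simp add: finite_pos_roots Q_nonzero)
  have set_ys: "set ys = ?Z" and length_ys: "length ys = card ?Z"
    using fin by (simp_all add: ys_def)
  have a: "ys ! i \<in> ?Z"
    using i set_ys length_ys by (metis Suc_lessD nth_mem)
  have b: "ys ! Suc i \<in> ?Z"
    using i set_ys length_ys by (metis nth_mem)
  have "ys ! i < ys ! Suc i"
    using i by (simp add: ys_def sorted_list_of_set_nth_less)
  have no_root: "poly (Q (n + 2)) x \<noteq> 0" if "ys ! i < x" "x < ys ! Suc i" for x
  proof
    assume "poly (Q (n + 2)) x = 0"
    moreover have "x > 0"
      using a that by (simp add: pos_roots_def)
    ultimately have "x \<in> ?Z"
      by (simp add: pos_roots_def)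
    then show False
      using not_in_between_sorted_list_of_set_nth[OF fin i] that by (simp add: ys_def)
  qed
  note sa = pderiv_Q_times_Q_pos_at_pos_root[OF a]
    and sb = pderiv_Q_times_Q_pos_at_pos_root[OF b]
  have "poly (pderiv (Q (n + 2))) (ys ! i) * poly (pderiv (Q (n + 2))) (ys ! Suc i) < 0"
  proof (rule pderiv_opposite_signs_at_adjacent_roots[OF \<open>ys ! i < ys ! Suc i\<close> _ _ no_root])
    show "poly (Q (n + 2)) (ys ! i) = 0" "poly (Q (n + 2)) (ys ! Suc i) = 0"
      using a b by (simp_all add: pos_roots_def)
    show "poly (pderiv (Q (n + 2))) (ys ! i) \<noteq> 0" "poly (pderiv (Q (n + 2))) (ys ! Suc i) \<noteq> 0"
      using sa sb by auto
  qed
  then have "poly (Q n) (ys ! i) * poly (Q n) (ys ! Suc i) < 0"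
    using sa sb by (smt (verit) mult_less_0_iff zero_less_mult_iff)
  then obtain c where "ys ! i < c" "c < ys ! Suc i" "poly (Q n) c = 0"
    using poly_IVT[OF \<open>ys ! i < ys ! Suc i\<close>] by blast
  moreover have "c > 0"
    using a \<open>ys ! i < c\<close> by (simp add: pos_roots_def)
  ultimately show ?thesis
    by (auto simp: pos_roots_def)
qed

theorem interlace_Q: "interlace (Q (n + 2)) (Q n)"
proof -
  have "card (pos_roots (Q n)) + 1 = card (pos_roots (Q (n + 2)))"
    by (simp add: card_pos_roots)
  then have "\<forall>i < card (pos_roots (Q n)).
       sorted_list_of_set (pos_roots (Q (n + 2))) ! i < sorted_list_of_set (pos_roots (Q n)) ! i
     \<and> sorted_list_of_set (pos_roots (Q n)) ! i < sorted_list_of_set (pos_roots (Q (n + 2))) ! Suc i"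
    by (intro sorted_list_of_set_interlace finite_pos_roots Q_nonzero root_between_adjacent_pos_roots)
  then show ?thesis
    using \<open>card (pos_roots (Q n)) + 1 = _\<close>
    by (simp add: interlace_def pos_zeros_def pos_roots_def[symmetric])
qed

end

theorem mainTheorem9:
  fixes l1 l2 :: real and Q :: "nat \<Rightarrow> real poly"
  assumes "l1 \<ge> 0" and "l2 > 0"
    and deg: "\<And>n. degree (Q n) = n"
    and lead: "\<And>n. lead_coeff (Q n) > 0"
    and orth: "\<And>n m. sob_ip l1 l2 (Q n) (Q m) = (if n = m then 1 else 0)"
  shows "(\<exists>\<alpha> \<beta> :: nat \<Rightarrow> real. \<forall>n.
            [:0, 0, 1:] * Q n
              = smult (\<alpha> n) (Q (n + 2)) + smult (\<beta> n) (Q n)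
                + (if n \<ge> 2 then smult (\<alpha> (n - 2)) (Q (n - 2)) else 0))
       \<and> (\<forall>n \<ge> 2. (\<forall>z. poly (map_poly complex_of_real (Q n)) z = 0 \<longrightarrow> Im z = 0)
                  \<and> interlace (Q n) (Q (n - 2)))"
proof -
  interpret sobolev_orthonormal l1 l2 Q
    using assms by unfold_locales auto
  have "(\<forall>z. poly (map_poly complex_of_real (Q n)) z = 0 \<longrightarrow> Im z = 0) \<and> interlace (Q n) (Q (n - 2))"
    if "n \<ge> 2" for n
  proof -
    obtain m where "n = m + 2"
      using \<open>n \<ge> 2\<close> by (metis le_add_diff_inverse2)
    then show ?thesis
      using Q_complex_roots_real interlace_Q[of m] by simp
  qed
  then show ?thesis
    using three_term_recurrence by blast
qed

end
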